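(* Assume $M$ has genus zero and $a\in(0,1)$, $b\in(0,1]$. Let $\alpha=\ln\big(\frac{1-a}{b}\big)$ and $\beta=\ln\big(1+\frac{q'a}{1-a}\big)$, and let $\tilde\mu$ be the probability measure on $(\mathrm s,\mathrm s')\in Q^{\mathsf V}\times Q'^{\mathsf V}$ given by $$\tilde\mu(\mathrm s,\mathrm s')\propto\exp\Big(\sum_{\{v_1,v_2\}\in\mathsf E}\delta_{\mathrm s(v_1),\mathrm s(v_2)}\big(\alpha+\beta\,\delta_{\mathrm s'(v_1),\mathrm s'(v_2)}\big)\Big),$$ where $\delta_{x,y}=1$ if $x=y$ and $0$ otherwise. Then the law of $\sigma$ under $\mathbf P$ equals the law of $\mathrm s$ under $\tilde\mu$.
   Context: $M$ is the sphere or the plane. Let $\mathsf G=(\mathsf V,\mathsf E)$ be a finite connected graph embedded in $M$ with all faces topological discs, and $\mathsf G^*=(\mathsf U,\mathsf E^* )$ its embedded dual ($\mathsf U$ = faces of $\mathsf G$); $e^*$ is the dual edge crossing $e$, $\xi^*=\{e^*:e\in\xi\}$. Fix integers $q,q'\ge1$ and finite $Q,Q'\subset\mathbb C$ with $Q=-Q$, $Q'=-Q'$, $|Q|=q$, $|Q'|=q'$. For $\sigma:\mathsf V\to Q$, $\eta(\sigma)\subseteq\mathsf E^*$ is the set of $e^*$ whose primal $e$ has endpoints with different $\sigma$-values; for $\sigma':\mathsf U\to Q'$, $\eta(\sigma')\subseteq\mathsf E$ is the set of $e$ whose dual $e^*$ has endpoints with different $\sigma'$-values. $\mathbf P(\sigma,\sigma')\propto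 a^{|\eta(\sigma')|}b^{|\eta(\sigma)|}$ on $\Sigma=\{(\sigma,\sigma')\in Q^{\mathsf V}\times Q'^{\mathsf U}:\eta(\sigma)^*\cap\eta(\sigma')=\emptyset\}$. *)

theory Defs
  imports "HOL-Library.FuncSet" Complex_Main
begin

text \<open>Embedded graphs are represented combinatorially by a combinatorial map
  (rotation system): a finite nonempty set of darts D, a fixed-point-free
  involution alpha on D (the two half-edges of an edge) and a permutation
  sigma of D (cyclic order of darts around a vertex).
  The dual map is (sigma o alpha, alpha): the dual edge of the edge {d, alpha d}
  joins the face of d and the face of alpha d.  We identify e* with e.\<close>

definition orb :: "('d \<Rightarrow> 'd) \<Rightarrow> 'd \<Rightarrow> 'd set" where
  "orb f d = {(f ^^ n) d | n. True}"

definition verts :: "'d set \<Rightarrow> ('d \<Rightarrow> 'd) \<Rightarrow> 'd set set" where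
  "verts D sigma = orb sigma ` D"

definition edges :: "'d set \<Rightarrow> ('d \<Rightarrow> 'd) \<Rightarrow> 'd set set" where
  "edges D alpha = orb alpha ` D"

definition faces :: "'d set \<Rightarrow> ('d \<Rightarrow> 'd) \<Rightarrow> ('d \<Rightarrow> 'd) \<Rightarrow> 'd set set" where
  "faces D alpha sigma = orb (sigma \<circ> alpha) ` D"

definition map_rel :: "'d set \<Rightarrow> ('d \<Rightarrow> 'd) \<Rightarrow> ('d \<Rightarrow> 'd) \<Rightarrow> ('d \<times> 'd) set" where
  "map_rel D alpha sigma = {(x, alpha x) | x. x \<in> D} \<union> {(x, sigma x) | x. x \<in> D}"

text \<open>A finite connected graph cellularly embedded in the sphere (genus zero,
  Euler formula V - E + F = 2).\<close>
definition planar_map :: "'d set \<Rightarrow> ('d \<Rightarrow> 'd) \<Rightarrow> ('d \<Rightarrow> 'd) \<Rightarrow> bool" where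
  "planar_map D alpha sigma \<longleftrightarrow>
     finite D \<and> D \<noteq> {} \<and> bij_betw alpha D D \<and> bij_betw sigma D D \<and>
     (\<forall>d\<in>D. alpha d \<noteq> d \<and> alpha (alpha d) = d) \<and>
     (\<forall>d\<in>D. \<forall>d'\<in>D. (d, d') \<in> (map_rel D alpha sigma)\<^sup>*) \<and>
     int (card (verts D sigma)) - int (card (edges D alpha))
       + int (card (faces D alpha sigma)) = 2"

definition eta_primal :: "'d set \<Rightarrow> ('d \<Rightarrow> 'd) \<Rightarrow> ('d \<Rightarrow> 'd) \<Rightarrow> ('d set \<Rightarrow> 'c) \<Rightarrow> 'd set set" where
  "eta_primal D alpha sigma s =
     {orb alpha d | d. d \<in> D \<and> s (orb sigma d) \<noteq> s (orb sigma (alpha d))}"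

definition eta_dual :: "'d set \<Rightarrow> ('d \<Rightarrow> 'd) \<Rightarrow> ('d \<Rightarrow> 'd) \<Rightarrow> ('d set \<Rightarrow> 'c) \<Rightarrow> 'd set set" where
  "eta_dual D alpha sigma s' = eta_primal D alpha (sigma \<circ> alpha) s'"

definition Sigma_conf :: "'d set \<Rightarrow> ('d \<Rightarrow> 'd) \<Rightarrow> ('d \<Rightarrow> 'd) \<Rightarrow> complex set \<Rightarrow> complex set
    \<Rightarrow> (('d set \<Rightarrow> complex) \<times> ('d set \<Rightarrow> complex)) set" where
  "Sigma_conf D alpha sigma Q Q' =
     {(s, s'). s \<in> (verts D sigma \<rightarrow>\<^sub>E Q) \<and> s' \<in> (faces D alpha sigma \<rightarrow>\<^sub>E Q') \<and>
               eta_primal D alpha sigma s \<inter> eta_dual D alpha sigma s' = {}}"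

definition P_weight :: "'d set \<Rightarrow> ('d \<Rightarrow> 'd) \<Rightarrow> ('d \<Rightarrow> 'd) \<Rightarrow> real \<Rightarrow> real
    \<Rightarrow> ('d set \<Rightarrow> complex) \<times> ('d set \<Rightarrow> complex) \<Rightarrow> real" where
  "P_weight D alpha sigma a b p =
     a ^ card (eta_dual D alpha sigma (snd p)) * b ^ card (eta_primal D alpha sigma (fst p))"

definition law_P :: "'d set \<Rightarrow> ('d \<Rightarrow> 'd) \<Rightarrow> ('d \<Rightarrow> 'd) \<Rightarrow> complex set \<Rightarrow> complex set
    \<Rightarrow> real \<Rightarrow> real \<Rightarrow> ('d set \<Rightarrow> complex) \<Rightarrow> real" where
  "law_P D alpha sigma Q Q' a b s0 =
     (\<Sum>p\<in>{p \<in> Sigma_conf D alpha sigma Q Q'. fst p = s0}. P_weight D alpha sigma a b p)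
     / (\<Sum>p\<in>Sigma_conf D alpha sigma Q Q'. P_weight D alpha sigma a b p)"

definition mu_weight :: "'d set \<Rightarrow> ('d \<Rightarrow> 'd) \<Rightarrow> ('d \<Rightarrow> 'd) \<Rightarrow> real \<Rightarrow> real
    \<Rightarrow> ('d set \<Rightarrow> complex) \<Rightarrow> ('d set \<Rightarrow> complex) \<Rightarrow> real" where
  "mu_weight D alpha sigma al be s s' =
     exp (\<Sum>e\<in>edges D alpha.
            (if e \<notin> eta_primal D alpha sigma s then 1 else 0) *
            (al + be * (if e \<notin> eta_primal D alpha sigma s' then 1 else 0)))"

definition law_mu :: "'d set \<Rightarrow> ('d \<Rightarrow> 'd) \<Rightarrow> ('d \<Rightarrow> 'd) \<Rightarrow> complex set \<Rightarrow> complex set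
    \<Rightarrow> real \<Rightarrow> real \<Rightarrow> ('d set \<Rightarrow> complex) \<Rightarrow> real" where
  "law_mu D alpha sigma Q Q' al be s0 =
     (\<Sum>s'\<in>(verts D sigma \<rightarrow>\<^sub>E Q'). mu_weight D alpha sigma al be s0 s')
     / (\<Sum>s\<in>(verts D sigma \<rightarrow>\<^sub>E Q). \<Sum>s'\<in>(verts D sigma \<rightarrow>\<^sub>E Q'). mu_weight D alpha sigma al be s s')"

end

(*
  Fix the primal spins s and let A be the set of edges on which s agrees.  The weight
  a^|eta(sigma')| is a product over the edges of factors a + (1 - a) delta_e, where delta_e
  says that sigma' agrees across the dual edge e*; the weight of mu~ is a product over A of
  factors e^alpha (1 + (e^beta - 1) delta'_e), where delta'_e says that s' agrees across e.
  Expanding both products (the random-cluster expansion) and summing out the second spin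
  field writes the P-weight of s as
    b^|eta(s)| * sum over w <= A of a^|w| (1 - a)^|A - w| q'^k*(E - w)
  and the mu~-weight of s as
    ((1 - a) / b)^|A| * sum over w <= A of (q' a / (1 - a))^|w| q'^k(w),
  where k(w) counts the clusters of the spanning subgraph with edge set w and k*(E - w) those
  of the dual graph with the complementary dual edges.  On the sphere
  k*(E - w) = k(w) - |V| + 1 + |w|, so the two weights are proportional with a factor that
  does not depend on s.

  This duality identity comes from Euler's formula.  Four times the genus of the submap that
  keeps a set of edges never decreases when an edge is added; it vanishes for the empty submap
  and, by planarity, for the whole map.  Hence every submap of the map and of its dual has
  genus zero, and a submap and the dual submap on the complementary edges have the same faces.
*)

theory Submission
  imports Defs
begin

section \<open>Connected components of a relation\<close>

definition component_rel :: "'a set \<Rightarrow> ('a \<Rightarrow> 'a \<Rightarrow> bool) \<Rightarrow> 'a rel" where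
  "component_rel D r = {(x, y). x \<in> D \<and> y \<in> D \<and> equivclp r x y}"

definition n_components :: "'a set \<Rightarrow> ('a \<Rightarrow> 'a \<Rightarrow> bool) \<Rightarrow> nat" where
  "n_components D r = card (D // component_rel D r)"

lemma equiv_component_rel: "equiv D (component_rel D r)"
  unfolding component_rel_def
  by (auto intro!: equivI refl_onI symI transI intro: equivclp_sym equivclp_trans)

lemma equivclp_least:
  assumes "r \<le> equivclp s"
  shows "equivclp r \<le> equivclp s"
proof
  fix x y assume "equivclp r x y"
  then show "equivclp s x y"
    by induction (use assms in \<open>auto intro: equivclp_trans equivclp_sym\<close>)
qed

lemma n_components_cong:
  assumes "r \<le> equivclp s" and "s \<le> equivclp r"
  shows "n_components D r = n_components D s"
proof -
  have "equivclp r = equivclp s"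
    using equivclp_least[OF assms(1)] equivclp_least[OF assms(2)] by (rule antisym)
  then show ?thesis unfolding n_components_def component_rel_def by simp
qed

lemma equivclp_add_edge_iff:
  "equivclp (\<lambda>a b. r a b \<or> a = u \<and> b = v) x y \<longleftrightarrow>
     equivclp r x y \<or> (equivclp r x u \<and> equivclp r v y) \<or> (equivclp r x v \<and> equivclp r u y)"
  (is "equivclp ?r' x y \<longleftrightarrow> _")
proof
  assume "equivclp ?r' x y"
  then show "equivclp r x y \<or> (equivclp r x u \<and> equivclp r v y) \<or> (equivclp r x v \<and> equivclp r u y)"
    by induction (auto intro: equivclp_trans equivclp_sym equivclp_into_equivclp)
next
  have mono: "equivclp r \<le> equivclp ?r'" by (rule equivclp_least) auto
  have "equivclp ?r' u v" by auto
  then show "equivclp r x y \<or> (equivclp r x u \<and> equivclp r v y) \<or> (equivclp r x v \<and> equivclp r u y)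
      \<Longrightarrow> equivclp ?r' x y"
    using mono by (blast intro: equivclp_trans equivclp_sym)
qed

lemma component_rel_add_edge:
  fixes r :: "'a \<Rightarrow> 'a \<Rightarrow> bool"
  assumes "u \<in> D" and "v \<in> D"
  defines "C \<equiv> component_rel D r"
  shows "component_rel D (\<lambda>a b. r a b \<or> a = u \<and> b = v) = C \<union> C``{u} \<times> C``{v} \<union> C``{v} \<times> C``{u}"
  using assms unfolding C_def component_rel_def equivclp_add_edge_iff by (auto intro: equivclp_sym)

lemma card_quotient_merge_classes:
  assumes fin: "finite D" and C: "equiv D C" and uv: "u \<in> D" "v \<in> D" "(u, v) \<notin> C"
    and C': "C' = C \<union> C``{u} \<times> C``{v} \<union> C``{v} \<times> C``{u}"
  shows "card (D // C) = card (D // C') + 1"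
proof -
  define X Y where "X = C``{u}" and "Y = C``{v}"
  define W where "W = D // C - {X, Y}"
  have XY: "X \<in> D // C" "Y \<in> D // C" "X \<noteq> Y"
    using uv C unfolding X_def Y_def by (auto simp: quotientI equiv_class_eq_iff)
  have disj: "X \<inter> Y = {}" using quotient_disj[OF C XY(1,2)] XY(3) by blast
  have uX: "u \<in> X" unfolding X_def by (rule equiv_class_self[OF C uv(1)])
  have XYD: "X \<subseteq> D" "Y \<subseteq> D" using XY C by (auto dest: in_quotient_imp_subset)
  have class_X: "C``{a} = X" if "a \<in> X" for a
    using that C unfolding X_def by (metis Image_singleton_iff equiv_class_eq)
  have class_Y: "C``{a} = Y" if "a \<in> Y" for a
    using that C unfolding Y_def by (metis Image_singleton_iff equiv_class_eq)
  have class': "C'``{a} = (if a \<in> X \<union> Y then X \<union> Y else C``{a})" for a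
    using class_X class_Y disj unfolding C' X_def[symmetric] Y_def[symmetric] by auto
  have "D // C' = insert (X \<union> Y) W"
  proof -
    have "D // C' = (\<lambda>a. C'``{a}) ` (X \<union> Y) \<union> (\<lambda>a. C'``{a}) ` (D - (X \<union> Y))"
      using XYD unfolding quotient_def by blast
    also have "(\<lambda>a. C'``{a}) ` (X \<union> Y) = {X \<union> Y}"
      using class' uX by auto
    also have "(\<lambda>a. C'``{a}) ` (D - (X \<union> Y)) = (\<lambda>a. C``{a}) ` (D - (X \<union> Y))"
      using class' by simp
    also have "\<dots> = W"
    proof -
      have "a \<in> C``{a}" if "a \<in> D" for a using C that by (rule equiv_class_self)
      then show ?thesis
        unfolding W_def quotient_def using class_X class_Y by blast
    qed
    finally show ?thesis by simp
  qed
  moreover have "X \<union> Y \<notin> W"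
  proof
    assume "X \<union> Y \<in> W"
    then have "X \<union> Y \<in> D // C" "X \<union> Y \<noteq> X" using XY disj unfolding W_def by auto
    then show False using quotient_disj[OF C _ XY(1)] uX by blast
  qed
  moreover have "D // C = insert X (insert Y W)" "X \<notin> insert Y W" "Y \<notin> W"
    using XY unfolding W_def by auto
  moreover have "finite W" using fin C unfolding W_def
    by (auto intro: finite_quotient simp: equiv_def)
  ultimately show ?thesis by simp
qed

lemma n_components_add_connected_edge:
  assumes "(u, v) \<in> component_rel D r"
  shows "n_components D (\<lambda>a b. r a b \<or> a = u \<and> b = v) = n_components D r"
  by (rule n_components_cong) (use assms in \<open>auto simp: component_rel_def\<close>)

lemma n_components_add_separating_edge:
  assumes "finite D" and "u \<in> D" and "v \<in> D" and "(u, v) \<notin> component_rel D r"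
  shows "n_components D (\<lambda>a b. r a b \<or> a = u \<and> b = v) + 1 = n_components D r"
  unfolding n_components_def
  by (rule card_quotient_merge_classes[OF assms(1) equiv_component_rel assms(2-4)
        component_rel_add_edge[OF assms(2,3)], symmetric])

lemma n_components_add_edge_bounds:
  assumes "finite D" and "u \<in> D" and "v \<in> D"
  shows "n_components D (\<lambda>a b. r a b \<or> a = u \<and> b = v) \<le> n_components D r"
    and "n_components D r \<le> n_components D (\<lambda>a b. r a b \<or> a = u \<and> b = v) + 1"
  using n_components_add_connected_edge[of u v D r] n_components_add_separating_edge[OF assms, of r]
  by (cases "(u, v) \<in> component_rel D r"; simp)+

lemma equivclp_respecting:
  assumes "\<And>x y. r x y \<Longrightarrow> f x = f y" and "equivclp r x y"
  shows "f x = f y"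
  using assms(2) by induction (auto dest: assms(1))

lemma card_PiE_respecting_equiv:
  assumes fin: "finite D" and C: "equiv D C"
  shows "card {f \<in> D \<rightarrow>\<^sub>E Q. \<forall>(x, y) \<in> C. f x = f y} = card Q ^ card (D // C)"
proof -
  define lift where "lift g = restrict (\<lambda>x. g (C``{x})) D" for g :: "'a set \<Rightarrow> 'b"
  have C_D: "x \<in> D" "y \<in> D" if "(x, y) \<in> C" for x y using that equiv_type[OF C] by blast+
  have inj: "inj_on lift (D // C \<rightarrow>\<^sub>E Q)"
  proof (rule inj_onI)
    fix g1 g2 assume g: "g1 \<in> D // C \<rightarrow>\<^sub>E Q" "g2 \<in> D // C \<rightarrow>\<^sub>E Q" and eq: "lift g1 = lift g2"
    have "g1 X = g2 X" if X: "X \<in> D // C" for X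
    proof -
      obtain x where x: "X = C``{x}" "x \<in> D" using X by (rule quotientE)
      have "lift g1 x = lift g2 x" by (simp add: eq)
      then show ?thesis using x by (simp add: lift_def)
    qed
    moreover have "g1 \<in> extensional (D // C)" "g2 \<in> extensional (D // C)" using g
      by (auto simp: PiE_def)
    ultimately show "g1 = g2" by (rule extensionalityI[rotated 2])
  qed
  have image: "lift ` (D // C \<rightarrow>\<^sub>E Q) = {f \<in> D \<rightarrow>\<^sub>E Q. \<forall>(x, y) \<in> C. f x = f y}"
  proof
    show "lift ` (D // C \<rightarrow>\<^sub>E Q) \<subseteq> {f \<in> D \<rightarrow>\<^sub>E Q. \<forall>(x, y) \<in> C. f x = f y}"
      using equiv_class_eq[OF C] C_D by (auto simp: lift_def quotientI)
    show "{f \<in> D \<rightarrow>\<^sub>E Q. \<forall>(x, y) \<in> C. f x = f y} \<subseteq> lift ` (D // C \<rightarrow>\<^sub>E Q)"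
    proof
      fix f assume f: "f \<in> {f \<in> D \<rightarrow>\<^sub>E Q. \<forall>(x, y) \<in> C. f x = f y}"
      have class_image: "f ` (C``{x}) = {f x}" if "x \<in> D" for x
        using f equiv_class_self[OF C that] by auto
      define g where "g = restrict (\<lambda>X. the_elem (f ` X)) (D // C)"
      have "g \<in> D // C \<rightarrow>\<^sub>E Q" using f class_image by (auto simp: g_def elim!: quotientE)
      moreover have "lift g = f" using f class_image
        by (auto simp: lift_def g_def quotientI PiE_iff extensional_def)
      ultimately show "f \<in> lift ` (D // C \<rightarrow>\<^sub>E Q)" by blast
    qed
  qed
  have "card {f \<in> D \<rightarrow>\<^sub>E Q. \<forall>(x, y) \<in> C. f x = f y} = card (D // C \<rightarrow>\<^sub>E Q)"
    unfolding image[symmetric] by (rule card_image[OF inj])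
  also have "\<dots> = card Q ^ card (D // C)"
    using fin C by (simp add: card_PiE finite_quotient equiv_def)
  finally show ?thesis .
qed

lemma inj_on_pullback: "inj_on (\<lambda>s. restrict (\<lambda>x. s (\<pi> x)) D) (\<pi> ` D \<rightarrow>\<^sub>E Q)"
proof (rule inj_onI)
  fix s1 s2 assume s: "s1 \<in> \<pi> ` D \<rightarrow>\<^sub>E Q" "s2 \<in> \<pi> ` D \<rightarrow>\<^sub>E Q"
    and eq: "restrict (\<lambda>x. s1 (\<pi> x)) D = restrict (\<lambda>x. s2 (\<pi> x)) D"
  have "s1 v = s2 v" if v: "v \<in> \<pi> ` D" for v
  proof -
    obtain x where x: "x \<in> D" "v = \<pi> x" using v by blast
    have "restrict (\<lambda>x. s1 (\<pi> x)) D x = restrict (\<lambda>x. s2 (\<pi> x)) D x" by (simp add: eq)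
    then show ?thesis using x by simp
  qed
  moreover have "s1 \<in> extensional (\<pi> ` D)" "s2 \<in> extensional (\<pi> ` D)" using s
    by (auto simp: PiE_def)
  ultimately show "s1 = s2" by (rule extensionalityI[rotated 2])
qed

lemma card_PiE_pullback_respecting:
  assumes fin: "finite D" and C: "equiv D C" and V: "\<pi> ` D = V"
    and ker: "\<And>x y. x \<in> D \<Longrightarrow> y \<in> D \<Longrightarrow> \<pi> x = \<pi> y \<Longrightarrow> (x, y) \<in> C"
  shows "card {s \<in> V \<rightarrow>\<^sub>E Q. \<forall>(x, y) \<in> C. s (\<pi> x) = s (\<pi> y)} = card Q ^ card (D // C)"
proof -
  define A where "A = {s \<in> V \<rightarrow>\<^sub>E Q. \<forall>(x, y) \<in> C. s (\<pi> x) = s (\<pi> y)}"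
  define B where "B = {f \<in> D \<rightarrow>\<^sub>E Q. \<forall>(x, y) \<in> C. f x = f y}"
  define pull where "pull s = restrict (\<lambda>x. s (\<pi> x)) D" for s :: "'b \<Rightarrow> 'c"
  have C_D: "x \<in> D" "y \<in> D" if "(x, y) \<in> C" for x y using that equiv_type[OF C] by blast+
  have inj: "inj_on pull A"
    unfolding A_def pull_def V[symmetric] by (rule inj_on_subset[OF inj_on_pullback]) blast
  have image: "pull ` A = B"
  proof
    show "pull ` A \<subseteq> B"
    proof (intro image_subsetI)
      fix s assume s: "s \<in> A"
      then have "pull s \<in> D \<rightarrow>\<^sub>E Q" using V unfolding A_def pull_def by auto
      moreover have "pull s x = pull s y" if "(x, y) \<in> C" for x y
        using s that C_D[OF that] unfolding A_def pull_def by auto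
      ultimately show "pull s \<in> B" unfolding B_def by blast
    qed
    show "B \<subseteq> pull ` A"
    proof
      fix f assume f: "f \<in> B"
      define rep where "rep v = (SOME x. x \<in> D \<and> \<pi> x = v)" for v
      have rep: "rep v \<in> D" "\<pi> (rep v) = v" if "v \<in> V" for v
        using someI_ex[of "\<lambda>x. x \<in> D \<and> \<pi> x = v"] that V unfolding rep_def by blast+
      have f_rep: "f (rep (\<pi> x)) = f x" if "x \<in> D" for x
        using f rep[of "\<pi> x"] ker that V unfolding B_def by blast
      define s where "s = restrict (\<lambda>v. f (rep v)) V"
      have "s \<in> V \<rightarrow>\<^sub>E Q" using f rep unfolding B_def s_def by auto
      moreover have "s (\<pi> x) = s (\<pi> y)" if "(x, y) \<in> C" for x y
        using f f_rep C_D[OF that] that V unfolding B_def s_def by auto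
      ultimately have "s \<in> A" unfolding A_def by blast
      moreover have "pull s = f"
        using f f_rep V unfolding B_def pull_def s_def by (auto simp: PiE_iff extensional_def)
      ultimately show "f \<in> pull ` A" by blast
    qed
  qed
  have "card A = card B" unfolding image[symmetric] by (rule card_image[OF inj, symmetric])
  then show ?thesis using card_PiE_respecting_equiv[OF fin C] unfolding A_def B_def by simp
qed

section \<open>Cycles of a permutation\<close>

definition graph_rel :: "'a set \<Rightarrow> ('a \<Rightarrow> 'a) \<Rightarrow> 'a \<Rightarrow> 'a \<Rightarrow> bool" where
  "graph_rel D f x y \<longleftrightarrow> x \<in> D \<and> y = f x"

definition n_cycles :: "'a set \<Rightarrow> ('a \<Rightarrow> 'a) \<Rightarrow> nat" where
  "n_cycles D f = n_components D (graph_rel D f)"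

lemma funpow_in_bij_betw: "bij_betw f D D \<Longrightarrow> z \<in> D \<Longrightarrow> (f ^^ n) z \<in> D"
  using bij_betw_funpow bij_betwE by metis

lemma funpow_period_exists:
  assumes fin: "finite D" and f: "bij_betw f D D" and z: "z \<in> D"
  shows "\<exists>n > 0. (f ^^ n) z = z"
proof -
  have "(\<lambda>i. (f ^^ i) z) ` {..card D} \<subseteq> D" using funpow_in_bij_betw[OF f z] by blast
  then have "card ((\<lambda>i. (f ^^ i) z) ` {..card D}) < card {..card D}"
    using card_mono[OF fin] by (simp add: le_imp_less_Suc)
  then have "\<not> inj_on (\<lambda>i. (f ^^ i) z) {..card D}" by (rule pigeonhole)
  then obtain i j where "i \<noteq> j" "(f ^^ i) z = (f ^^ j) z" unfolding inj_on_def by blast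
  then obtain i j where ij: "i < j" "(f ^^ i) z = (f ^^ j) z" by (metis linorder_neqE_nat)
  have "(f ^^ i) ((f ^^ (j - i)) z) = (f ^^ i) z"
    using ij by (metis funpow_add le_add_diff_inverse less_imp_le comp_apply)
  moreover have "inj_on (f ^^ i) D" using bij_betw_funpow[OF f] bij_betw_imp_inj_on by blast
  ultimately have "(f ^^ (j - i)) z = z"
    using funpow_in_bij_betw[OF f z] z by (meson inj_onD)
  then show ?thesis using ij(1) by (intro exI[of _ "j - i"]) simp
qed

lemma equivclp_graph_rel_funpow:
  assumes "bij_betw f D D" and "d \<in> D"
  shows "equivclp (graph_rel D f) d ((f ^^ n) d)"
proof (induction n)
  case (Suc n)
  have "graph_rel D f ((f ^^ n) d) ((f ^^ Suc n) d)"
    using funpow_in_bij_betw[OF assms] by (simp add: graph_rel_def)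
  with Suc show ?case by (blast intro: equivclp_into_equivclp)
qed simp

lemma orb_self: "d \<in> orb f d"
  unfolding orb_def by (auto intro: exI[of _ 0])

lemma orb_eq_component:
  assumes fin: "finite D" and f: "bij_betw f D D" and d: "d \<in> D"
  shows "orb f d = component_rel D (graph_rel D f) `` {d}"
proof
  show "orb f d \<subseteq> component_rel D (graph_rel D f) `` {d}"
    using equivclp_graph_rel_funpow[OF f d] funpow_in_bij_betw[OF f d] d
    by (auto simp: orb_def component_rel_def)
  show "component_rel D (graph_rel D f) `` {d} \<subseteq> orb f d"
  proof
    fix y assume "y \<in> component_rel D (graph_rel D f) `` {d}"
    then have "equivclp (graph_rel D f) d y" by (simp add: component_rel_def)
    then show "y \<in> orb f d"
    proof (induction rule: equivclp_induct)
      case base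
      show ?case by (rule orb_self)
    next
      case (step y z)
      from step.IH obtain k where k: "y = (f ^^ k) d" unfolding orb_def by blast
      from step.hyps(2) show ?case
      proof
        assume "graph_rel D f y z"
        then have "z = (f ^^ Suc k) d" using k by (simp add: graph_rel_def)
        then show ?thesis unfolding orb_def by blast
      next
        assume "graph_rel D f z y"
        then have z: "z \<in> D" "y = f z" by (auto simp: graph_rel_def)
        obtain m where "m > 0" "(f ^^ m) z = z" using funpow_period_exists[OF fin f z(1)] by blast
        then have "z = (f ^^ (m - 1)) y" using z(2)
          by (metis Suc_diff_1 funpow_Suc_right comp_apply)
        then have "z = (f ^^ (m - 1 + k)) d" using k by (simp add: funpow_add)
        then show ?thesis unfolding orb_def by blast
      qed
    qed
  qed
qed

lemma orb_apply:
  assumes "finite D" and "bij_betw f D D" and "d \<in> D"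
  shows "orb f (f d) = orb f d"
proof -
  have "f d \<in> D" using assms(2,3) bij_betwE by blast
  have "(d, f d) \<in> component_rel D (graph_rel D f)"
    using assms(3) \<open>f d \<in> D\<close> by (auto simp: component_rel_def graph_rel_def)
  then have "component_rel D (graph_rel D f) `` {f d} = component_rel D (graph_rel D f) `` {d}"
    by (rule equiv_class_eq[OF equiv_component_rel, symmetric])
  then show ?thesis using orb_eq_component[OF assms(1,2)] assms(3) \<open>f d \<in> D\<close> by simp
qed

lemma card_orbits:
  assumes "finite D" and "bij_betw f D D"
  shows "card (orb f ` D) = n_cycles D f"
proof -
  have "orb f ` D = D // component_rel D (graph_rel D f)"
    unfolding quotient_def using orb_eq_component[OF assms] by auto
  then show ?thesis by (simp add: n_cycles_def n_components_def)
qed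

lemma n_cycles_cong: "(\<And>z. z \<in> D \<Longrightarrow> f z = g z) \<Longrightarrow> n_cycles D f = n_cycles D g"
  unfolding n_cycles_def graph_rel_def by (metis (no_types))

lemma orbit_edge_redundant:
  assumes fin: "finite D" and f: "bij_betw f D D" and z: "z \<in> D"
    and edges: "\<And>i. (f ^^ i) z \<noteq> z \<Longrightarrow> r ((f ^^ i) z) (f ((f ^^ i) z))"
  shows "equivclp r z (f z)"
proof -
  have "equivclp r (f z) ((f ^^ Suc i) z) \<or> equivclp r (f z) z" for i
  proof (induction i)
    case (Suc i)
    then show ?case
      using edges[of "Suc i"] by (cases "(f ^^ Suc i) z = z") (auto intro: equivclp_into_equivclp)
  qed simp
  moreover obtain n where "n > 0" "(f ^^ n) z = z" using funpow_period_exists[OF fin f z] by blast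
  ultimately have "equivclp r (f z) z" by (metis Suc_diff_1)
  then show ?thesis by (rule equivclp_sym)
qed

lemma n_cycles_delete_edge:
  assumes fin: "finite D" and f: "bij_betw f D D" and y: "y \<in> D"
  shows "n_cycles D f = n_components D (graph_rel (D - {y}) f)"
  unfolding n_cycles_def
proof (rule n_components_cong)
  have y_edge: "equivclp (graph_rel (D - {y}) f) y (f y)"
    by (rule orbit_edge_redundant[OF fin f y])
       (simp add: graph_rel_def funpow_in_bij_betw[OF f y])
  show "graph_rel D f \<le> equivclp (graph_rel (D - {y}) f)"
  proof (intro predicate2I)
    fix a b assume "graph_rel D f a b"
    then show "equivclp (graph_rel (D - {y}) f) a b"
      using y_edge by (cases "a = y") (auto simp: graph_rel_def)
  qed
  show "graph_rel (D - {y}) f \<le> equivclp (graph_rel D f)"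
    by (auto simp: graph_rel_def)
qed

lemma bij_betw_swap_values:
  assumes "bij_betw r D D" and "x \<in> D" and "y \<in> D"
  shows "bij_betw (r(x := r y, y := r x)) D D"
proof -
  have "bij_betw (id(x := y, y := x)) D D"
    by (rule bij_betw_byWitness[where f' = "id(x := y, y := x)"]) (use assms in auto)
  moreover have "r(x := r y, y := r x) = r \<circ> id(x := y, y := x)" by auto
  ultimately show ?thesis using assms(1) by (simp add: bij_betw_trans)
qed

lemma n_cycles_swap_components:
  assumes fin: "finite D" and r: "bij_betw r D D" and xy: "x \<in> D" "y \<in> D" "x \<noteq> y"
  shows "n_cycles D r = n_components D (\<lambda>a b. graph_rel (D - {x, y}) r a b \<or> a = x \<and> b = r x)"
    and "n_cycles D (r(x := r y, y := r x))
       = n_components D (\<lambda>a b. graph_rel (D - {x, y}) r a b \<or> a = x \<and> b = r y)"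
proof -
  have "graph_rel (D - {y}) r = (\<lambda>a b. graph_rel (D - {x, y}) r a b \<or> a = x \<and> b = r x)"
    using xy unfolding graph_rel_def by (auto simp: fun_eq_iff)
  then show "n_cycles D r = n_components D (\<lambda>a b. graph_rel (D - {x, y}) r a b \<or> a = x \<and> b = r x)"
    using n_cycles_delete_edge[OF fin r xy(2)] by simp
  have "graph_rel (D - {y}) (r(x := r y, y := r x))
      = (\<lambda>a b. graph_rel (D - {x, y}) r a b \<or> a = x \<and> b = r y)"
    using xy unfolding graph_rel_def by (auto simp: fun_eq_iff)
  then show "n_cycles D (r(x := r y, y := r x))
      = n_components D (\<lambda>a b. graph_rel (D - {x, y}) r a b \<or> a = x \<and> b = r y)"
    using n_cycles_delete_edge[OF fin bij_betw_swap_values[OF r xy(1,2)] xy(2)] by simp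
qed

lemma n_cycles_swap_le:
  assumes "finite D" and r: "bij_betw r D D" and "x \<in> D" "y \<in> D" "x \<noteq> y"
  shows "n_cycles D (r(x := r y, y := r x)) \<le> n_cycles D r + 1"
proof -
  have "r x \<in> D" "r y \<in> D" using r assms(3,4) bij_betwE by blast+
  then show ?thesis
    unfolding n_cycles_swap_components[OF assms]
    using n_components_add_edge_bounds[OF assms(1,3), of "r x" "graph_rel (D - {x, y}) r"]
      n_components_add_edge_bounds[OF assms(1,3), of "r y" "graph_rel (D - {x, y}) r"] by linarith
qed

lemma n_cycles_swap_separated:
  assumes fin: "finite D" and r: "bij_betw r D D" and xy: "x \<in> D" "y \<in> D" "x \<noteq> y"
    and sep: "(x, y) \<notin> component_rel D (graph_rel D r)"
  shows "n_cycles D (r(x := r y, y := r x)) + 1 = n_cycles D r"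
proof -
  define R0 where "R0 = graph_rel (D - {x, y}) r"
  have rD: "r x \<in> D" "r y \<in> D" using r xy bij_betwE by blast+
  have "equivclp R0 x (r x)"
  proof (rule orbit_edge_redundant[OF fin r xy(1)])
    fix i assume "(r ^^ i) x \<noteq> x"
    moreover have "(r ^^ i) x \<noteq> y"
      using sep equivclp_graph_rel_funpow[OF r xy(1)] xy by (auto simp: component_rel_def)
    ultimately show "R0 ((r ^^ i) x) (r ((r ^^ i) x))"
      unfolding R0_def graph_rel_def using funpow_in_bij_betw[OF r xy(1)] by simp
  qed
  then have "n_cycles D r = n_components D R0"
    unfolding n_cycles_swap_components(1)[OF fin r xy] R0_def[symmetric] using xy(1) rD(1)
    by (intro n_components_add_connected_edge) (simp add: component_rel_def)
  moreover have "(x, r y) \<notin> component_rel D R0"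
  proof
    assume "(x, r y) \<in> component_rel D R0"
    moreover have "equivclp R0 \<le> equivclp (graph_rel D r)"
      by (rule equivclp_least) (auto simp: R0_def graph_rel_def)
    ultimately have "equivclp (graph_rel D r) x (r y)" by (auto simp: component_rel_def)
    moreover have "equivclp (graph_rel D r) (r y) y" using xy(2) by (auto simp: graph_rel_def)
    ultimately show False using sep xy by (auto simp: component_rel_def intro: equivclp_trans)
  qed
  ultimately show ?thesis
    unfolding n_cycles_swap_components(2)[OF fin r xy] R0_def[symmetric]
    using n_components_add_separating_edge[OF fin xy(1) rD(2)] by simp
qed

section \<open>Submaps of a combinatorial map and their genus\<close>

(* The submap keeping the edges whose darts lie in S: darts outside S become fixed points of
   the edge involution, so their edges disappear while all vertices (sigma-orbits) remain. *)
definition sub_involution :: "('a \<Rightarrow> 'a) \<Rightarrow> 'a set \<Rightarrow> 'a \<Rightarrow> 'a" where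
  "sub_involution alpha S z = (if z \<in> S then alpha z else z)"

definition submap_components :: "'a set \<Rightarrow> ('a \<Rightarrow> 'a) \<Rightarrow> ('a \<Rightarrow> 'a) \<Rightarrow> 'a set \<Rightarrow> nat" where
  "submap_components D alpha sigma S =
     n_components D (\<lambda>x y. graph_rel D sigma x y \<or> graph_rel S alpha x y)"

definition submap_faces :: "'a set \<Rightarrow> ('a \<Rightarrow> 'a) \<Rightarrow> ('a \<Rightarrow> 'a) \<Rightarrow> 'a set \<Rightarrow> nat" where
  "submap_faces D alpha sigma S = n_cycles D (sigma \<circ> sub_involution alpha S)"

(* By Euler's formula V - E + F = 2 k - 2 g for a map with k components, this is 4 g for the
   submap keeping S, which has card S / 2 edges. *)
definition four_genus :: "'a set \<Rightarrow> ('a \<Rightarrow> 'a) \<Rightarrow> ('a \<Rightarrow> 'a) \<Rightarrow> 'a set \<Rightarrow> int" where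
  "four_genus D alpha sigma S =
     4 * int (submap_components D alpha sigma S) + int (card S)
     - 2 * int (n_cycles D sigma) - 2 * int (submap_faces D alpha sigma S)"

lemma four_genus_empty: "four_genus D alpha sigma {} = 0"
proof -
  have "graph_rel {} alpha = (\<lambda>_ _. False)" by (simp add: graph_rel_def fun_eq_iff)
  then have "submap_components D alpha sigma {} = n_cycles D sigma"
    by (simp add: submap_components_def n_cycles_def)
  moreover have "submap_faces D alpha sigma {} = n_cycles D sigma"
    by (simp add: submap_faces_def sub_involution_def comp_def)
  ultimately show ?thesis by (simp add: four_genus_def)
qed

locale combinatorial_map =
  fixes D :: "'d set" and alpha sigma :: "'d \<Rightarrow> 'd"
  assumes finite_darts: "finite D"
    and bij_sigma: "bij_betw sigma D D"
    and alpha_in: "d \<in> D \<Longrightarrow> alpha d \<in> D"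
    and alpha_neq: "d \<in> D \<Longrightarrow> alpha d \<noteq> d"
    and alpha_alpha: "d \<in> D \<Longrightarrow> alpha (alpha d) = d"
begin

lemma bij_alpha: "bij_betw alpha D D"
  by (rule bij_betw_byWitness[where f' = alpha]) (auto simp: alpha_in alpha_alpha)

lemma dual_map: "combinatorial_map D alpha (sigma \<circ> alpha)"
  by unfold_locales
    (auto simp: finite_darts alpha_in alpha_neq alpha_alpha
      intro: bij_betw_trans[OF bij_alpha bij_sigma])

lemma bij_sub_involution:
  assumes "alpha ` S \<subseteq> S"
  shows "bij_betw (sub_involution alpha S) D D"
  by (rule bij_betw_byWitness[where f' = "sub_involution alpha S"])
     (use assms in \<open>auto simp: sub_involution_def alpha_in alpha_alpha\<close>)

lemma orb_alpha: "d \<in> D \<Longrightarrow> orb alpha d = {d, alpha d}"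
proof -
  assume d: "d \<in> D"
  have "(alpha ^^ n) d = (if even n then d else alpha d)" for n
    by (induction n) (auto simp: alpha_alpha d)
  then show ?thesis unfolding orb_def
    by (auto intro: exI[of _ "0::nat"] exI[of _ "1::nat"] split: if_splits)
qed

lemma mem_edge:
  assumes "e \<in> edges D alpha" and "z \<in> e"
  shows "z \<in> D" and "orb alpha z = e"
proof -
  obtain d where d: "d \<in> D" "e = orb alpha d" using assms(1) unfolding edges_def by blast
  then show "z \<in> D" using assms(2) by (auto simp: orb_alpha alpha_in)
  then show "orb alpha z = e" using d assms(2) by (auto simp: orb_alpha alpha_alpha)
qed

lemma Union_edges_subset: "w \<subseteq> edges D alpha \<Longrightarrow> \<Union>w \<subseteq> D"
  using mem_edge(1) by blast

lemma alpha_image_Union_edges: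
  assumes "w \<subseteq> edges D alpha"
  shows "alpha ` \<Union>w \<subseteq> \<Union>w"
proof (intro image_subsetI)
  fix z assume "z \<in> \<Union>w"
  then obtain e where e: "e \<in> w" "z \<in> e" by blast
  then have "alpha z \<in> orb alpha z" using mem_edge[of e z] assms by (auto simp: orb_alpha)
  then show "alpha z \<in> \<Union>w" using mem_edge(2)[of e z] e assms by auto
qed

lemma card_Union_edges:
  assumes "w \<subseteq> edges D alpha"
  shows "card (\<Union>w) = 2 * card w"
proof -
  have "pairwise disjnt w"
    using mem_edge(2) assms unfolding pairwise_def disjnt_def by blast
  moreover have "card e = 2" if e: "e \<in> w" for e
  proof -
    obtain d where "d \<in> D" "e = orb alpha d" using e assms unfolding edges_def by blast
    then show ?thesis by (simp add: orb_alpha alpha_neq[symmetric])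
  qed
  ultimately show ?thesis
    by (simp add: card_Union_disjoint card_ge_0_finite)
qed

lemma Union_edges_diff:
  assumes "w \<subseteq> edges D alpha"
  shows "\<Union>(edges D alpha - w) = D - \<Union>w"
proof
  show "\<Union>(edges D alpha - w) \<subseteq> D - \<Union>w"
    using mem_edge assms by blast
  have "z \<in> orb alpha z" "orb alpha z \<in> edges D alpha" if "z \<in> D" for z
    using that by (auto simp: orb_alpha edges_def)
  then show "D - \<Union>w \<subseteq> \<Union>(edges D alpha - w)" by blast
qed

lemma Union_edges: "\<Union>(edges D alpha) = D"
  using Union_edges_diff[of "{}"] by simp

lemma card_darts: "card D = 2 * card (edges D alpha)"
  using card_Union_edges[of "edges D alpha"] by (simp add: Union_edges)

lemma card_verts: "card (verts D sigma) = n_cycles D sigma"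
  unfolding verts_def by (rule card_orbits[OF finite_darts bij_sigma])

lemma card_faces: "card (faces D alpha sigma) = n_cycles D (sigma \<circ> alpha)"
  unfolding faces_def by (rule card_orbits[OF finite_darts bij_betw_trans[OF bij_alpha bij_sigma]])

lemma submap_components_insert_edge:
  assumes "x \<in> D"
  shows "submap_components D alpha sigma (insert x (insert (alpha x) S))
       = n_components D
           (\<lambda>a b. (graph_rel D sigma a b \<or> graph_rel S alpha a b) \<or> a = x \<and> b = alpha x)"
  unfolding submap_components_def
proof (rule n_components_cong)
  have "graph_rel (insert x (insert (alpha x) S)) alpha a b
      \<longleftrightarrow> graph_rel S alpha a b \<or> a = x \<and> b = alpha x \<or> a = alpha x \<and> b = x" for a b
    using alpha_alpha[OF assms] unfolding graph_rel_def by auto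
  then show "(\<lambda>a b. graph_rel D sigma a b \<or> graph_rel (insert x (insert (alpha x) S)) alpha a b)
      \<le> equivclp (\<lambda>a b. (graph_rel D sigma a b \<or> graph_rel S alpha a b) \<or> a = x \<and> b = alpha x)"
    and "(\<lambda>a b. (graph_rel D sigma a b \<or> graph_rel S alpha a b) \<or> a = x \<and> b = alpha x)
      \<le> equivclp
           (\<lambda>a b. graph_rel D sigma a b \<or> graph_rel (insert x (insert (alpha x) S)) alpha a b)"
    by auto
qed

lemma face_graph_le_submap_equivclp:
  "graph_rel D (sigma \<circ> sub_involution alpha S)
     \<le> equivclp (\<lambda>a b. graph_rel D sigma a b \<or> graph_rel S alpha a b)"
proof (intro predicate2I)
  fix a b assume "graph_rel D (sigma \<circ> sub_involution alpha S) a b"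
  then have a: "a \<in> D" "b = sigma (sub_involution alpha S a)" by (auto simp: graph_rel_def)
  show "equivclp (\<lambda>a b. graph_rel D sigma a b \<or> graph_rel S alpha a b) a b"
  proof (cases "a \<in> S")
    case True
    then have "graph_rel S alpha a (alpha a)" "graph_rel D sigma (alpha a) b"
      using a alpha_in unfolding graph_rel_def sub_involution_def by auto
    then show ?thesis by (blast intro: equivclp_trans)
  next
    case False
    then show ?thesis using a unfolding graph_rel_def sub_involution_def by auto
  qed
qed

(* A new edge either joins two components, and then it also merges two faces, or it lies in
   one component and adds at most one face. *)
lemma four_genus_insert_edge:
  assumes S: "S \<subseteq> D" "alpha ` S \<subseteq> S" and x: "x \<in> D" "x \<notin> S"
  shows "four_genus D alpha sigma S \<le> four_genus D alpha sigma (insert x (insert (alpha x) S))"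
proof -
  define y where "y = alpha x"
  have y: "y \<in> D" "x \<noteq> y" "alpha y = x"
    using x alpha_in alpha_neq alpha_alpha unfolding y_def by metis+
  have "y \<notin> S" using y(3) x(2) S(2) by blast
  define S' where "S' = insert x (insert y S)"
  define r where "r = sigma \<circ> sub_involution alpha S"
  define R where "R = (\<lambda>a b. graph_rel D sigma a b \<or> graph_rel S alpha a b)"
  have r: "bij_betw r D D"
    unfolding r_def using bij_sub_involution[OF S(2)] bij_sigma by (rule bij_betw_trans)
  have "sigma \<circ> sub_involution alpha S' = r(x := r y, y := r x)"
    using x y \<open>y \<notin> S\<close> unfolding S'_def r_def sub_involution_def by (auto simp: fun_eq_iff y_def)
  then have faces': "submap_faces D alpha sigma S' = n_cycles D (r(x := r y, y := r x))"
    by (simp add: submap_faces_def)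
  have faces: "submap_faces D alpha sigma S = n_cycles D r" by (simp add: submap_faces_def r_def)
  have comps': "submap_components D alpha sigma S' = n_components D (\<lambda>a b. R a b \<or> a = x \<and> b = y)"
    unfolding S'_def y_def R_def by (rule submap_components_insert_edge[OF x(1)])
  have comps: "submap_components D alpha sigma S = n_components D R"
    by (simp add: submap_components_def R_def)
  have card_S': "card S' = card S + 2"
    using finite_subset[OF S(1) finite_darts] x y \<open>y \<notin> S\<close> unfolding S'_def by simp
  show ?thesis
  proof (cases "(x, y) \<in> component_rel D R")
    case True
    then have "submap_components D alpha sigma S' = submap_components D alpha sigma S"
      unfolding comps' comps by (rule n_components_add_connected_edge)
    moreover have "submap_faces D alpha sigma S' \<le> submap_faces D alpha sigma S + 1"
      unfolding faces' faces by (rule n_cycles_swap_le[OF finite_darts r x(1) y(1,2)])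
    ultimately show ?thesis
      using card_S' unfolding four_genus_def S'_def y_def by linarith
  next
    case False
    then have "submap_components D alpha sigma S' + 1 = submap_components D alpha sigma S"
      unfolding comps' comps by (rule n_components_add_separating_edge[OF finite_darts x(1) y(1)])
    moreover have "(x, y) \<notin> component_rel D (graph_rel D r)"
      using False equivclp_least[OF face_graph_le_submap_equivclp]
      unfolding r_def R_def by (auto simp: component_rel_def)
    then have "submap_faces D alpha sigma S' + 1 = submap_faces D alpha sigma S"
      unfolding faces' faces by (rule n_cycles_swap_separated[OF finite_darts r x(1) y(1,2)])
    ultimately show ?thesis
      using card_S' unfolding four_genus_def S'_def y_def by linarith
  qed
qed

lemma four_genus_mono:
  assumes "S \<subseteq> T" and "T \<subseteq> D" and "alpha ` S \<subseteq> S" and "alpha ` T \<subseteq> T"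
  shows "four_genus D alpha sigma S \<le> four_genus D alpha sigma T"
  using assms
proof (induction "card (T - S)" arbitrary: S rule: less_induct)
  case less
  show ?case
  proof (cases "S = T")
    case False
    then obtain x where x: "x \<in> T" "x \<notin> S" using less.prems(1) by blast
    define S' where "S' = insert x (insert (alpha x) S)"
    have S': "S' \<subseteq> T" "alpha ` S' \<subseteq> S'"
      using x less.prems alpha_alpha unfolding S'_def by auto
    have "T - S' \<subset> T - S" using x unfolding S'_def by auto
    then have "card (T - S') < card (T - S)"
      using finite_subset[OF less.prems(2) finite_darts] by (meson finite_Diff psubset_card_mono)
    have "four_genus D alpha sigma S \<le> four_genus D alpha sigma S'"
      unfolding S'_def using less.prems x by (intro four_genus_insert_edge) auto
    also have "\<dots> \<le> four_genus D alpha sigma T"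
      using less.hyps[OF \<open>card (T - S') < card (T - S)\<close>] S' less.prems by blast
    finally show ?thesis .
  qed simp
qed

end

section \<open>Planar maps and duality\<close>

lemma planar_map_combinatorial_map: "planar_map D alpha sigma \<Longrightarrow> combinatorial_map D alpha sigma"
  unfolding planar_map_def combinatorial_map_def using bij_betwE by blast

lemma planar_map_connected:
  assumes "planar_map D alpha sigma"
  shows "submap_components D alpha sigma D = 1"
proof -
  have "(d, d') \<in> component_rel D (\<lambda>x y. graph_rel D sigma x y \<or> graph_rel D alpha x y)"
    if "d \<in> D" "d' \<in> D" for d d'
  proof -
    have "(d, d') \<in> (map_rel D alpha sigma)\<^sup>*" using assms that unfolding planar_map_def by blast
    then have "(\<lambda>x y. graph_rel D sigma x y \<or> graph_rel D alpha x y)\<^sup>*\<^sup>* d d'"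
      by (induction rule: rtrancl_induct)
        (auto simp: map_rel_def graph_rel_def intro: rtranclp.rtrancl_into_rtrancl)
    then show ?thesis using that by (simp add: component_rel_def rtranclp_into_equivclp)
  qed
  then have "component_rel D (\<lambda>x y. graph_rel D sigma x y \<or> graph_rel D alpha x y) = D \<times> D"
    by (auto simp: component_rel_def)
  moreover have "D // (D \<times> D) = {D}" using assms unfolding planar_map_def quotient_def by auto
  ultimately show ?thesis by (simp add: submap_components_def n_components_def)
qed

lemma four_genus_planar_map:
  assumes "planar_map D alpha sigma"
  shows "four_genus D alpha sigma D = 0"
proof -
  interpret combinatorial_map D alpha sigma using assms by (rule planar_map_combinatorial_map)
  have "submap_faces D alpha sigma D = card (faces D alpha sigma)"
    unfolding submap_faces_def card_faces by (rule n_cycles_cong) (simp add: sub_involution_def)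
  moreover have
    "int (card (verts D sigma)) - int (card (edges D alpha)) + int (card (faces D alpha sigma)) = 2"
    using assms by (simp add: planar_map_def)
  ultimately show ?thesis
    using planar_map_connected[OF assms] card_darts card_verts by (simp add: four_genus_def)
qed

lemma four_genus_planar_submap:
  assumes "planar_map D alpha sigma" and "S \<subseteq> D" and "alpha ` S \<subseteq> S"
  shows "four_genus D alpha sigma S = 0"
proof -
  interpret combinatorial_map D alpha sigma using assms(1) by (rule planar_map_combinatorial_map)
  have "four_genus D alpha sigma {} \<le> four_genus D alpha sigma S"
    using assms by (intro four_genus_mono) auto
  moreover have "four_genus D alpha sigma S \<le> four_genus D alpha sigma D"
    using assms alpha_in by (intro four_genus_mono) auto
  ultimately show ?thesis
    using four_genus_empty[of D alpha sigma] four_genus_planar_map[OF assms(1)] by linarith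
qed

lemma planar_map_dual:
  assumes "planar_map D alpha sigma"
  shows "planar_map D alpha (sigma \<circ> alpha)"
proof -
  interpret combinatorial_map D alpha sigma using assms by (rule planar_map_combinatorial_map)
  interpret dual: combinatorial_map D alpha "sigma \<circ> alpha" by (rule dual_map)
  have "map_rel D alpha sigma \<subseteq> (map_rel D alpha (sigma \<circ> alpha))\<^sup>*"
  proof
    fix p assume "p \<in> map_rel D alpha sigma"
    then consider x where "x \<in> D" "p = (x, alpha x)" | x where "x \<in> D" "p = (x, sigma x)"
      unfolding map_rel_def by blast
    then show "p \<in> (map_rel D alpha (sigma \<circ> alpha))\<^sup>*"
    proof cases
      case (2 x)
      then have "(x, alpha x) \<in> map_rel D alpha (sigma \<circ> alpha)"
        and "(alpha x, sigma x) \<in> map_rel D alpha (sigma \<circ> alpha)"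
        using alpha_in alpha_alpha unfolding map_rel_def by force+
      then show ?thesis using 2 by auto
    qed (auto simp: map_rel_def)
  qed
  then have "(map_rel D alpha sigma)\<^sup>* \<subseteq> (map_rel D alpha (sigma \<circ> alpha))\<^sup>*"
    by (rule rtrancl_subset_rtrancl)
  then have "\<forall>d\<in>D. \<forall>d'\<in>D. (d, d') \<in> (map_rel D alpha (sigma \<circ> alpha))\<^sup>*"
    using assms unfolding planar_map_def by blast
  moreover have "card (faces D alpha (sigma \<circ> alpha)) = card (verts D sigma)"
    unfolding dual.card_faces card_verts by (rule n_cycles_cong) (simp add: alpha_alpha)
  moreover have "verts D (sigma \<circ> alpha) = faces D alpha sigma" by (simp add: verts_def faces_def)
  ultimately show ?thesis
    using assms dual.bij_sigma unfolding planar_map_def by simp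
qed

(* The submap with edges w and the dual submap with the complementary edges have the same
   faces and both have genus zero; subtracting their Euler relations gives the identity. *)
lemma dual_submap_components:
  assumes pm: "planar_map D alpha sigma" and w: "w \<subseteq> edges D alpha"
  shows "int (submap_components D alpha (sigma \<circ> alpha) (\<Union>(edges D alpha - w)))
       = int (submap_components D alpha sigma (\<Union>w)) - int (card (verts D sigma)) + 1 + int (card w)"
proof -
  interpret combinatorial_map D alpha sigma using pm by (rule planar_map_combinatorial_map)
  define S where "S = \<Union>w"
  have S: "S \<subseteq> D" "alpha ` S \<subseteq> S" "card S = 2 * card w"
    unfolding S_def using Union_edges_subset alpha_image_Union_edges card_Union_edges w by auto
  have co_S: "\<Union>(edges D alpha - w) = D - S"
    unfolding S_def by (rule Union_edges_diff[OF w])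
  have co_S_closed: "alpha ` (D - S) \<subseteq> D - S"
  proof (intro image_subsetI DiffI)
    fix z assume z: "z \<in> D - S"
    then show "alpha z \<in> D" using alpha_in by blast
    show "alpha z \<notin> S"
    proof
      assume "alpha z \<in> S"
      then have "alpha (alpha z) \<in> S" using S(2) by blast
      then show False using z alpha_alpha by simp
    qed
  qed
  have faces: "submap_faces D alpha (sigma \<circ> alpha) (D - S) = submap_faces D alpha sigma S"
    unfolding submap_faces_def by (rule n_cycles_cong) (simp add: sub_involution_def alpha_alpha)
  have "four_genus D alpha sigma S = 0"
    using four_genus_planar_submap[OF pm S(1,2)] .
  moreover have "four_genus D alpha (sigma \<circ> alpha) (D - S) = 0"
    using four_genus_planar_submap[OF planar_map_dual[OF pm] _ co_S_closed] by simp
  moreover have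
    "int (card (verts D sigma)) - int (card (edges D alpha)) + int (card (faces D alpha sigma)) = 2"
    using pm by (simp add: planar_map_def)
  moreover have "int (card (D - S)) = int (card D) - int (card S)"
    using S(1) finite_darts by (simp add: card_Diff_subset finite_subset card_mono)
  ultimately show ?thesis
    unfolding co_S S_def[symmetric] four_genus_def faces
    using card_darts card_verts card_faces S(3) by linarith
qed

section \<open>Random-cluster expansion of the two marginals\<close>

lemma prod_of_bool:
  "finite A \<Longrightarrow> (\<Prod>x\<in>A. of_bool (P x)) = (of_bool (\<forall>x\<in>A. P x) :: 'a :: comm_semiring_1)"
  by (induction A rule: finite_induct) auto

lemma disjoint_weight_as_product:
  fixes a :: real
  assumes "finite E" and "X \<subseteq> E"
  shows "of_bool (\<eta> \<inter> X = {}) * a ^ card X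
       = (\<Prod>e\<in>E. of_bool (e \<notin> \<eta>) * a + (if e \<in> \<eta> then 1 else 1 - a) * of_bool (e \<notin> X))"
proof (cases "\<eta> \<inter> X = {}")
  case True
  then have "(\<Prod>e\<in>E. of_bool (e \<notin> \<eta>) * a + (if e \<in> \<eta> then 1 else 1 - a) * of_bool (e \<notin> X))
      = (\<Prod>e\<in>E. if e \<in> X then a else 1)"
    by (intro prod.cong) auto
  also have "\<dots> = a ^ card X"
    using assms by (simp add: prod.inter_restrict[symmetric] Int_absorb1)
  finally show ?thesis using True by simp
next
  case False
  then obtain e where "e \<in> \<eta>" "e \<in> X" by blast
  then have "(\<Prod>e\<in>E. of_bool (e \<notin> \<eta>) * a + (if e \<in> \<eta> then 1 else 1 - a) * of_bool (e \<notin> X)) = 0"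
    using assms by (intro prod_zero) auto
  then show ?thesis using False by simp
qed

lemma sum_Pow_complement_weights:
  fixes a :: real
  assumes fin_E: "finite E"
  shows "(\<Sum>u \<in> Pow E. (\<Prod>e\<in>E - u. of_bool (e \<notin> \<eta>) * a) * (\<Prod>e\<in>u. if e \<in> \<eta> then 1 else 1 - a) * k u)
       = (\<Sum>w \<in> Pow (E - \<eta>). a ^ card w * (1 - a) ^ card (E - \<eta> - w) * k (E - w))"
proof -
  define c where "c e = of_bool (e \<notin> \<eta>) * a" for e
  define d where "d e = (if e \<in> \<eta> then 1 else 1 - a)" for e
  have "(\<Sum>u \<in> Pow E. (\<Prod>e\<in>E - u. c e) * (\<Prod>e\<in>u. d e) * k u)
      = (\<Sum>w \<in> Pow E. (\<Prod>e\<in>w. c e) * (\<Prod>e\<in>E - w. d e) * k (E - w))"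
    by (rule sum.reindex_bij_witness[of _ "\<lambda>w. E - w" "\<lambda>w. E - w"])
      (auto simp: Diff_Diff_Int Int_absorb1)
  also have "\<dots> = (\<Sum>w \<in> Pow (E - \<eta>). (\<Prod>e\<in>w. c e) * (\<Prod>e\<in>E - w. d e) * k (E - w))"
  proof (rule sum.mono_neutral_right)
    show "\<forall>w \<in> Pow E - Pow (E - \<eta>). (\<Prod>e\<in>w. c e) * (\<Prod>e\<in>E - w. d e) * k (E - w) = 0"
      using fin_E by (auto simp: c_def intro!: prod_zero dest: finite_subset)
  qed (use fin_E in auto)
  also have "\<dots> = (\<Sum>w \<in> Pow (E - \<eta>). a ^ card w * (1 - a) ^ card (E - \<eta> - w) * k (E - w))"
  proof (intro sum.cong refl)
    fix w assume w: "w \<in> Pow (E - \<eta>)"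
    have "(\<Prod>e\<in>E - w. d e) = (\<Prod>e\<in>E - \<eta> - w. d e)"
      using fin_E by (intro prod.mono_neutral_right) (auto simp: d_def)
    moreover have "(\<Prod>e\<in>w. c e) = (\<Prod>e\<in>w. a)"
      using w by (intro prod.cong) (auto simp: c_def)
    ultimately show "(\<Prod>e\<in>w. c e) * (\<Prod>e\<in>E - w. d e) * k (E - w)
        = a ^ card w * (1 - a) ^ card (E - \<eta> - w) * k (E - w)"
      by (simp add: d_def)
  qed
  finally show ?thesis unfolding c_def d_def .
qed

lemma eta_primal_subset_edges: "eta_primal D alpha sigma s \<subseteq> edges D alpha"
  unfolding eta_primal_def edges_def by blast

definition P_marginal :: "'d set \<Rightarrow> ('d \<Rightarrow> 'd) \<Rightarrow> ('d \<Rightarrow> 'd) \<Rightarrow> complex set \<Rightarrow> complex set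
    \<Rightarrow> real \<Rightarrow> real \<Rightarrow> ('d set \<Rightarrow> complex) \<Rightarrow> real" where
  "P_marginal D alpha sigma Q Q' a b s =
     (\<Sum>p \<in> {p \<in> Sigma_conf D alpha sigma Q Q'. fst p = s}. P_weight D alpha sigma a b p)"

definition mu_marginal :: "'d set \<Rightarrow> ('d \<Rightarrow> 'd) \<Rightarrow> ('d \<Rightarrow> 'd) \<Rightarrow> complex set
    \<Rightarrow> real \<Rightarrow> real \<Rightarrow> ('d set \<Rightarrow> complex) \<Rightarrow> real" where
  "mu_marginal D alpha sigma Q' \<alpha> \<beta> s =
     (\<Sum>s' \<in> verts D sigma \<rightarrow>\<^sub>E Q'. mu_weight D alpha sigma \<alpha> \<beta> s s')"

lemma P_marginal_eq_face_sum:
  assumes "finite D" and "finite Q'" and s: "s \<in> verts D sigma \<rightarrow>\<^sub>E Q"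
  shows "P_marginal D alpha sigma Q Q' a b s
       = b ^ card (eta_primal D alpha sigma s) * (\<Sum>s' \<in> faces D alpha sigma \<rightarrow>\<^sub>E Q'.
           of_bool (eta_primal D alpha sigma s \<inter> eta_dual D alpha sigma s' = {})
           * a ^ card (eta_dual D alpha sigma s'))"
proof -
  define \<eta> where "\<eta> = eta_primal D alpha sigma s"
  have fin_F: "finite (faces D alpha sigma \<rightarrow>\<^sub>E Q')"
    using assms(1,2) unfolding faces_def by (simp add: finite_PiE)
  have "{p \<in> Sigma_conf D alpha sigma Q Q'. fst p = s}
      = Pair s ` {s' \<in> faces D alpha sigma \<rightarrow>\<^sub>E Q'. \<eta> \<inter> eta_dual D alpha sigma s' = {}}"
    using s unfolding Sigma_conf_def \<eta>_def by auto
  then have "P_marginal D alpha sigma Q Q' a b s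
      = (\<Sum>s' \<in> {s' \<in> faces D alpha sigma \<rightarrow>\<^sub>E Q'. \<eta> \<inter> eta_dual D alpha sigma s' = {}}.
           b ^ card \<eta> * a ^ card (eta_dual D alpha sigma s'))"
    unfolding P_marginal_def by (simp add: sum.reindex inj_on_def P_weight_def \<eta>_def mult.commute)
  also have "\<dots> = b ^ card \<eta> * (\<Sum>s' \<in> faces D alpha sigma \<rightarrow>\<^sub>E Q'.
                    of_bool (\<eta> \<inter> eta_dual D alpha sigma s' = {})
                    * a ^ card (eta_dual D alpha sigma s'))"
    using fin_F by (simp add: sum_distrib_left[symmetric] Collect_conj_eq)
  finally show ?thesis unfolding \<eta>_def .
qed

context combinatorial_map
begin

lemma agreeing_iff_constant_on_components:
  assumes X: "X \<subseteq> edges D alpha"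
  defines "R \<equiv> \<lambda>x y. graph_rel D sigma x y \<or> graph_rel (\<Union>X) alpha x y"
  shows "(\<forall>e\<in>X. e \<notin> eta_primal D alpha sigma s)
     \<longleftrightarrow> (\<forall>(x, y) \<in> component_rel D R. s (orb sigma x) = s (orb sigma y))"
proof
  assume agree: "\<forall>e\<in>X. e \<notin> eta_primal D alpha sigma s"
  have "s (orb sigma x) = s (orb sigma y)" if "R x y" for x y
  proof (cases "graph_rel D sigma x y")
    case True
    then show ?thesis using orb_apply[OF finite_darts bij_sigma] by (auto simp: graph_rel_def)
  next
    case False
    then obtain e where e: "e \<in> X" "x \<in> e" "y = alpha x"
      using \<open>R x y\<close> by (auto simp: R_def graph_rel_def)
    then have "x \<in> D" "orb alpha x = e" using mem_edge X by blast+
    then show ?thesis using agree e unfolding eta_primal_def by blast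
  qed
  then show "\<forall>(x, y) \<in> component_rel D R. s (orb sigma x) = s (orb sigma y)"
    unfolding component_rel_def using equivclp_respecting[of R "\<lambda>x. s (orb sigma x)"] by blast
next
  assume agree: "\<forall>(x, y) \<in> component_rel D R. s (orb sigma x) = s (orb sigma y)"
  show "\<forall>e\<in>X. e \<notin> eta_primal D alpha sigma s"
  proof (intro ballI notI)
    fix e assume "e \<in> X" and "e \<in> eta_primal D alpha sigma s"
    then obtain d where d: "d \<in> D" "e = orb alpha d" "s (orb sigma d) \<noteq> s (orb sigma (alpha d))"
      unfolding eta_primal_def by blast
    then have "R d (alpha d)" using \<open>e \<in> X\<close> orb_self[of d alpha] by (auto simp: R_def graph_rel_def)
    then have "(d, alpha d) \<in> component_rel D R" using d(1) alpha_in
      by (auto simp: component_rel_def)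
    then show False using agree d(3) by blast
  qed
qed

lemma card_spins_agreeing_on:
  fixes Q :: "'q set"
  assumes X: "X \<subseteq> edges D alpha"
  shows "card {s \<in> verts D sigma \<rightarrow>\<^sub>E Q. \<forall>e\<in>X. e \<notin> eta_primal D alpha sigma s}
       = card Q ^ submap_components D alpha sigma (\<Union>X)"
proof -
  define R where "R = (\<lambda>x y. graph_rel D sigma x y \<or> graph_rel (\<Union>X) alpha x y)"
  have same_vertex: "(x, y) \<in> component_rel D R"
    if "x \<in> D" "y \<in> D" "orb sigma x = orb sigma y" for x y
  proof -
    have "y \<in> orb sigma x" using orb_self[of y sigma] that(3) by simp
    then have "(x, y) \<in> component_rel D (graph_rel D sigma)"
      using orb_eq_component[OF finite_darts bij_sigma that(1)] by simp
    moreover have "equivclp (graph_rel D sigma) \<le> equivclp R"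
      by (rule equivclp_least) (auto simp: R_def)
    ultimately show ?thesis by (auto simp: component_rel_def)
  qed
  have "card {s \<in> verts D sigma \<rightarrow>\<^sub>E Q. \<forall>e\<in>X. e \<notin> eta_primal D alpha sigma s}
      = card {s \<in> verts D sigma \<rightarrow>\<^sub>E Q.
                \<forall>(x, y) \<in> component_rel D R. s (orb sigma x) = s (orb sigma y)}"
    unfolding R_def by (simp only: agreeing_iff_constant_on_components[OF X])
  also have "\<dots> = card Q ^ card (D // component_rel D R)"
    unfolding verts_def
    by (rule card_PiE_pullback_respecting[OF finite_darts equiv_component_rel refl same_vertex])
  finally show ?thesis by (simp add: submap_components_def n_components_def R_def)
qed

lemma random_cluster_expansion:
  fixes Q :: "'q set" and c d :: "'d set \<Rightarrow> real"
  assumes X: "X \<subseteq> edges D alpha" and Q: "finite Q"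
  shows "(\<Sum>s \<in> verts D sigma \<rightarrow>\<^sub>E Q. \<Prod>e\<in>X. c e + d e * of_bool (e \<notin> eta_primal D alpha sigma s))
       = (\<Sum>w \<in> Pow X. (\<Prod>e\<in>X - w. c e) * (\<Prod>e\<in>w. d e)
                        * real (card Q) ^ submap_components D alpha sigma (\<Union>w))"
proof -
  define agree where "agree w s \<longleftrightarrow> (\<forall>e\<in>w. e \<notin> eta_primal D alpha sigma s)"
    for w and s :: "'d set \<Rightarrow> 'q"
  define spins where "spins = verts D sigma \<rightarrow>\<^sub>E Q"
  have fin_X: "finite X" using X finite_subset finite_darts unfolding edges_def by blast
  have fin_spins: "finite spins" unfolding spins_def verts_def using finite_darts Q
    by (simp add: finite_PiE)
  have expand: "(\<Prod>e\<in>X. c e + d e * of_bool (e \<notin> eta_primal D alpha sigma s))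
      = (\<Sum>w \<in> Pow X. (\<Prod>e\<in>X - w. c e) * (\<Prod>e\<in>w. d e) * of_bool (agree w s))" for s
  proof -
    have "(\<Prod>e\<in>X. c e + d e * of_bool (e \<notin> eta_primal D alpha sigma s))
        = (\<Sum>w \<in> Pow X. (\<Prod>e\<in>w. d e * of_bool (e \<notin> eta_primal D alpha sigma s)) * (\<Prod>e\<in>X - w. c e))"
      by (subst prod_add[OF fin_X, symmetric]) (simp add: add.commute)
    also have "\<dots> = (\<Sum>w \<in> Pow X. (\<Prod>e\<in>X - w. c e) * (\<Prod>e\<in>w. d e) * of_bool (agree w s))"
    proof (rule sum.cong[OF refl])
      fix w assume "w \<in> Pow X"
      then have "finite w" using fin_X finite_subset by blast
      then show "(\<Prod>e\<in>w. d e * of_bool (e \<notin> eta_primal D alpha sigma s)) * (\<Prod>e\<in>X - w. c e)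
          = (\<Prod>e\<in>X - w. c e) * (\<Prod>e\<in>w. d e) * of_bool (agree w s)"
        by (simp add: prod.distrib prod_of_bool agree_def)
    qed
    finally show ?thesis .
  qed
  have count: "(\<Sum>s\<in>spins. of_bool (agree w s) :: real)
      = real (card Q) ^ submap_components D alpha sigma (\<Union>w)"
    if "w \<in> Pow X" for w
  proof -
    have "(\<Sum>s\<in>spins. of_bool (agree w s) :: real) = real (card {s \<in> spins. agree w s})"
      using fin_spins by (simp add: Int_def conj_commute)
    also have "card {s \<in> spins. agree w s} = card Q ^ submap_components D alpha sigma (\<Union>w)"
      unfolding spins_def agree_def using that X by (intro card_spins_agreeing_on) auto
    finally show ?thesis by simp
  qed
  have "(\<Sum>s\<in>spins. \<Prod>e\<in>X. c e + d e * of_bool (e \<notin> eta_primal D alpha sigma s))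
      = (\<Sum>w \<in> Pow X. \<Sum>s\<in>spins. (\<Prod>e\<in>X - w. c e) * (\<Prod>e\<in>w. d e) * of_bool (agree w s))"
    unfolding expand by (rule sum.swap)
  also have "\<dots> = (\<Sum>w \<in> Pow X. (\<Prod>e\<in>X - w. c e) * (\<Prod>e\<in>w. d e)
                        * real (card Q) ^ submap_components D alpha sigma (\<Union>w))"
    by (intro sum.cong refl) (simp add: sum_distrib_left[symmetric] count)
  finally show ?thesis unfolding spins_def .
qed

lemma mu_marginal_expansion:
  fixes s :: "'d set \<Rightarrow> complex"
  assumes "finite Q'"
  defines "A \<equiv> edges D alpha - eta_primal D alpha sigma s"
  shows "mu_marginal D alpha sigma Q' \<alpha> \<beta> s
       = exp \<alpha> ^ card A * (\<Sum>w \<in> Pow A. (exp \<beta> - 1) ^ card w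
                              * real (card Q') ^ submap_components D alpha sigma (\<Union>w))"
proof -
  have A: "A \<subseteq> edges D alpha" unfolding A_def by blast
  have fin_E: "finite (edges D alpha)" using finite_darts unfolding edges_def by simp
  have weight: "mu_weight D alpha sigma \<alpha> \<beta> s s'
      = (\<Prod>e\<in>A. exp \<alpha> + exp \<alpha> * (exp \<beta> - 1) * of_bool (e \<notin> eta_primal D alpha sigma s'))" for s'
  proof -
    have "mu_weight D alpha sigma \<alpha> \<beta> s s'
        = (\<Prod>e\<in>edges D alpha.
             exp (of_bool (e \<in> A) * (\<alpha> + \<beta> * of_bool (e \<notin> eta_primal D alpha sigma s'))))"
      unfolding mu_weight_def exp_sum[OF fin_E] A_def by (intro prod.cong) auto
    also have "\<dots> = (\<Prod>e\<in>A. exp (\<alpha> + \<beta> * of_bool (e \<notin> eta_primal D alpha sigma s')))"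
      using A fin_E by (intro prod.mono_neutral_cong_right) auto
    also have "\<dots> = (\<Prod>e\<in>A. exp \<alpha> + exp \<alpha> * (exp \<beta> - 1) * of_bool (e \<notin> eta_primal D alpha sigma s'))"
      by (intro prod.cong) (auto simp: exp_add algebra_simps)
    finally show ?thesis .
  qed
  have "mu_marginal D alpha sigma Q' \<alpha> \<beta> s
      = (\<Sum>w \<in> Pow A. exp \<alpha> ^ card (A - w) * (exp \<alpha> * (exp \<beta> - 1)) ^ card w
                        * real (card Q') ^ submap_components D alpha sigma (\<Union>w))"
    unfolding mu_marginal_def weight
    using random_cluster_expansion[OF A assms(1), of "\<lambda>_. exp \<alpha>" "\<lambda>_. exp \<alpha> * (exp \<beta> - 1)"]
    by (simp add: mult.assoc)
  also have "\<dots> = exp \<alpha> ^ card A * (\<Sum>w \<in> Pow A. (exp \<beta> - 1) ^ card w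
                              * real (card Q') ^ submap_components D alpha sigma (\<Union>w))"
    unfolding sum_distrib_left
  proof (intro sum.cong refl)
    fix w assume "w \<in> Pow A"
    then have "card A = card (A - w) + card w"
      using finite_subset[OF A fin_E] by (simp add: card_Diff_subset card_mono finite_subset)
    then show "exp \<alpha> ^ card (A - w) * (exp \<alpha> * (exp \<beta> - 1)) ^ card w
          * real (card Q') ^ submap_components D alpha sigma (\<Union>w)
        = exp \<alpha> ^ card A
          * ((exp \<beta> - 1) ^ card w * real (card Q') ^ submap_components D alpha sigma (\<Union>w))"
      by (simp add: power_add power_mult_distrib)
  qed
  finally show ?thesis .
qed

lemma P_marginal_expansion:
  fixes Q Q' :: "complex set" and s :: "'d set \<Rightarrow> complex"
  assumes s: "s \<in> verts D sigma \<rightarrow>\<^sub>E Q" and Q': "finite Q'"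
  defines "A \<equiv> edges D alpha - eta_primal D alpha sigma s"
  shows "P_marginal D alpha sigma Q Q' a b s
       = b ^ card (eta_primal D alpha sigma s) * (\<Sum>w \<in> Pow A. a ^ card w * (1 - a) ^ card (A - w)
           * real (card Q') ^ submap_components D alpha (sigma \<circ> alpha) (\<Union>(edges D alpha - w)))"
proof -
  interpret dual: combinatorial_map D alpha "sigma \<circ> alpha" by (rule dual_map)
  define E where "E = edges D alpha"
  define \<eta> where "\<eta> = eta_primal D alpha sigma s"
  define c where "c e = of_bool (e \<notin> \<eta>) * a" for e
  define d where "d e = (if e \<in> \<eta> then 1 else 1 - a)" for e
  have fin_E: "finite E" using finite_darts unfolding E_def edges_def by simp
  have "(\<Sum>s' \<in> faces D alpha sigma \<rightarrow>\<^sub>E Q'.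
           of_bool (\<eta> \<inter> eta_dual D alpha sigma s' = {}) * a ^ card (eta_dual D alpha sigma s'))
      = (\<Sum>s' \<in> faces D alpha sigma \<rightarrow>\<^sub>E Q'.
           \<Prod>e\<in>E. c e + d e * of_bool (e \<notin> eta_dual D alpha sigma s'))"
    unfolding c_def d_def eta_dual_def
    by (intro sum.cong refl disjoint_weight_as_product[OF fin_E])
      (simp add: E_def eta_primal_subset_edges)
  also have "\<dots> = (\<Sum>u \<in> Pow E. (\<Prod>e\<in>E - u. c e) * (\<Prod>e\<in>u. d e)
                     * real (card Q') ^ submap_components D alpha (sigma \<circ> alpha) (\<Union>u))"
    using dual.random_cluster_expansion[OF _ Q', of E c d]
    unfolding E_def eta_dual_def by (simp add: verts_def faces_def)
  also have "\<dots> = (\<Sum>w \<in> Pow A. a ^ card w * (1 - a) ^ card (A - w)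
                     * real (card Q') ^ submap_components D alpha (sigma \<circ> alpha) (\<Union>(E - w)))"
    unfolding c_def d_def A_def E_def[symmetric] \<eta>_def[symmetric]
      by (rule sum_Pow_complement_weights[OF fin_E])
  finally show ?thesis
    unfolding P_marginal_eq_face_sum[OF finite_darts Q' s] E_def \<eta>_def by simp
qed

end

lemma P_marginal_proportional:
  fixes Q Q' :: "complex set" and s :: "'d set \<Rightarrow> complex"
  assumes pm: "planar_map D alpha sigma" and a: "0 < a" "a < 1" and b: "0 < b"
    and Q': "finite Q'" and s: "s \<in> verts D sigma \<rightarrow>\<^sub>E Q"
  shows "P_marginal D alpha sigma Q Q' a b s * real (card Q') ^ card (verts D sigma)
       = real (card Q') * b ^ card (edges D alpha)
         * mu_marginal D alpha sigma Q' (ln ((1 - a) / b)) (ln (1 + real (card Q') * a / (1 - a)))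
             s"
proof -
  interpret combinatorial_map D alpha sigma using pm by (rule planar_map_combinatorial_map)
  define q where "q = real (card Q')"
  define \<eta> where "\<eta> = eta_primal D alpha sigma s"
  define A where "A = edges D alpha - \<eta>"
  define k where "k w = submap_components D alpha sigma (\<Union>w)" for w
  have fin_E: "finite (edges D alpha)" using finite_darts unfolding edges_def by simp
  have card_E: "card (edges D alpha) = card \<eta> + card A"
    using fin_E eta_primal_subset_edges[of D alpha sigma s] unfolding A_def \<eta>_def
    by (metis card_Diff_subset card_mono finite_subset le_add_diff_inverse)
  have exp_\<alpha>: "exp (ln ((1 - a) / b)) = (1 - a) / b" using a b by simp
  have exp_\<beta>: "exp (ln (1 + q * a / (1 - a))) - 1 = q * a / (1 - a)"
    using a by (simp add: q_def add_pos_nonneg)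
  have summand: "b ^ card \<eta> * (a ^ card w * (1 - a) ^ card (A - w)
                 * q ^ submap_components D alpha (sigma \<circ> alpha) (\<Union>(edges D alpha - w)))
        * q ^ card (verts D sigma)
      = q * b ^ card (edges D alpha)
        * (((1 - a) / b) ^ card A * ((q * a / (1 - a)) ^ card w * q ^ k w))"
    if w: "w \<in> Pow A" for w
  proof -
    have "w \<subseteq> edges D alpha" using w unfolding A_def by blast
    from dual_submap_components[OF pm this]
    have "submap_components D alpha (sigma \<circ> alpha) (\<Union>(edges D alpha - w)) + card (verts D sigma)
        = k w + 1 + card w" unfolding k_def by linarith
    then have "q ^ submap_components D alpha (sigma \<circ> alpha) (\<Union>(edges D alpha - w))
        * q ^ card (verts D sigma)
        = q ^ (k w + 1 + card w)" by (simp flip: power_add)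
    moreover have "card A = card (A - w) + card w"
      using w finite_subset[OF _ fin_E, of A] unfolding A_def
      by (simp add: card_Diff_subset card_mono finite_subset)
    ultimately show ?thesis
      using a b unfolding card_E by (simp add: power_add field_simps)
  qed
  show ?thesis
    unfolding P_marginal_expansion[OF s Q'] mu_marginal_expansion[OF Q'] exp_\<alpha> exp_\<beta>
      q_def[symmetric]
      A_def[symmetric] \<eta>_def[symmetric] sum_distrib_left sum_distrib_right k_def[symmetric]
    using summand by (intro sum.cong refl) (simp add: mult_ac)
qed

lemma law_P_eq_ratio:
  assumes "finite D" and "finite Q" and "finite Q'"
  shows "law_P D alpha sigma Q Q' a b s0
       = P_marginal D alpha sigma Q Q' a b s0
         / (\<Sum>s \<in> verts D sigma \<rightarrow>\<^sub>E Q. P_marginal D alpha sigma Q Q' a b s)"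
proof -
  have "finite (Sigma_conf D alpha sigma Q Q')"
    by (rule finite_subset[of _ "(verts D sigma \<rightarrow>\<^sub>E Q) \<times> (faces D alpha sigma \<rightarrow>\<^sub>E Q')"])
       (use assms in \<open>auto simp: Sigma_conf_def verts_def faces_def finite_PiE\<close>)
  moreover have "finite (verts D sigma \<rightarrow>\<^sub>E Q)" using assms by (simp add: verts_def finite_PiE)
  moreover have "fst ` Sigma_conf D alpha sigma Q Q' \<subseteq> verts D sigma \<rightarrow>\<^sub>E Q"
    by (auto simp: Sigma_conf_def)
  ultimately show ?thesis
    unfolding law_P_def P_marginal_def by (simp add: sum.group)
qed

lemma law_mu_eq_ratio:
  "law_mu D alpha sigma Q Q' \<alpha> \<beta> s0
     = mu_marginal D alpha sigma Q' \<alpha> \<beta> s0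
       / (\<Sum>s \<in> verts D sigma \<rightarrow>\<^sub>E Q. mu_marginal D alpha sigma Q' \<alpha> \<beta> s)"
  by (simp add: law_mu_def mu_marginal_def)

theorem theorem3p2:
  fixes D :: "'d set" and alpha sigma :: "'d \<Rightarrow> 'd"
    and Q Q' :: "complex set" and a b :: real
  assumes "planar_map D alpha sigma"
    and "finite Q" and "Q \<noteq> {}" and "uminus ` Q = Q"
    and "finite Q'" and "Q' \<noteq> {}" and "uminus ` Q' = Q'"
    and "0 < a" and "a < 1" and "0 < b" and "b \<le> 1"
  shows "\<forall>s0 \<in> (verts D sigma \<rightarrow>\<^sub>E Q).
           law_P D alpha sigma Q Q' a b s0 =
           law_mu D alpha sigma Q Q' (ln ((1 - a) / b))
                  (ln (1 + real (card Q') * a / (1 - a))) s0"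
proof
  fix s0 assume s0: "s0 \<in> verts D sigma \<rightarrow>\<^sub>E Q"
  define \<alpha> \<beta> where "\<alpha> = ln ((1 - a) / b)" and "\<beta> = ln (1 + real (card Q') * a / (1 - a))"
  define K where
    "K = real (card Q') * b ^ card (edges D alpha) / real (card Q') ^ card (verts D sigma)"
  have "real (card Q') > 0" using assms(5,6) by (simp add: card_gt_0_iff)
  then have "K \<noteq> 0" using assms(10) by (simp add: K_def)
  have P_eq: "P_marginal D alpha sigma Q Q' a b s = K * mu_marginal D alpha sigma Q' \<alpha> \<beta> s"
    if "s \<in> verts D sigma \<rightarrow>\<^sub>E Q" for s
    using P_marginal_proportional[OF assms(1,8,9,10,5) that] \<open>real (card Q') > 0\<close>
    unfolding K_def \<alpha>_def \<beta>_def by (simp add: field_simps)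
  have "finite D" using assms(1) by (simp add: planar_map_def)
  then show "law_P D alpha sigma Q Q' a b s0 = law_mu D alpha sigma Q Q' \<alpha> \<beta> s0"
    using P_eq s0 \<open>K \<noteq> 0\<close>
    by (simp add: law_P_eq_ratio[OF _ assms(2,5)] law_mu_eq_ratio sum_distrib_left[symmetric])
qed

end
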